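(* Let $C$ and $D$ be quasi-cyclic LDPC codes with circulant matrices (of a common size $z$ and common length), and let $H_{b(C)}$ and $H_{b(D)}$ be their base matrices. Let $C'$ (resp. $D'$) be the binary linear code with parity-check matrix $H_{b(C)}$ (resp. $H_{b(D)}$). If $C$ and $D$ satisfy the twisted condition $D^{\perp}\subset C$, then $C'$ and $D'$ satisfy the twisted condition $D'^{\perp}\subset C'$; equivalently, $H_{b(C)}\, H_{b(D)}^{T}=0$ over $\mathbb{F}_2$.
   Context: All codes are binary linear codes over $\mathbb{F}_2$. For a linear code $D\subseteq\mathbb{F}_2^n$, $D^{\perp}=\{d' : d\,d'^{T}=0\ \forall d\in D\}$. Codes $C,D$ satisfy the twisted condition if $D^{\perp}\subset C$; for parity-check matrices $H_C,H_D$ (so $C=\ker H_C$, $D=\ker H_D$) this is equivalent to $H_CH_D^T=0$. For a positive integer $z$, $I_z(1)$ is the $z\times z$ circulant permutation matrix of one circular right shift and $I_z(b)=I_z(1)^b$. A quasi-cyclic LDPC code with circulant matrices of size $z$ is given by a $J\times L$ model matrix $(p(i,j))$ with entries in $\{0,\dots,z-1\}\cup\{\infty\}$; its parity-check matrix is obtained by replacing each finite entry $p$ by $I_z(p)$ and each $\infty$ by the $z\times z$ zero matrix, and the code is the kernel of this matrix. Its base matrix is the $J\times L$ binary matrix with $1$ exactly at the positions where $p(i,j)\neq\infty$. *)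

theory Defs
  imports Main "HOL-Library.Z2"
begin

text \<open>Binary vectors of length n are functions nat => bit vanishing outside {0..<n};
  matrices are functions nat => nat => bit (row, column) together with explicit dimensions.\<close>

definition vecs :: "nat \<Rightarrow> (nat \<Rightarrow> bit) set" where
  "vecs n = {x. \<forall>i\<ge>n. x i = 0}"

definition ker_code :: "nat \<Rightarrow> nat \<Rightarrow> (nat \<Rightarrow> nat \<Rightarrow> bit) \<Rightarrow> (nat \<Rightarrow> bit) set" where
  "ker_code m n H = {x \<in> vecs n. \<forall>r<m. (\<Sum>c<n. H r c * x c) = 0}"

definition dual_code :: "nat \<Rightarrow> (nat \<Rightarrow> bit) set \<Rightarrow> (nat \<Rightarrow> bit) set" where
  "dual_code n D = {y \<in> vecs n. \<forall>d\<in>D. (\<Sum>i<n. d i * y i) = 0}"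

definition twisted :: "nat \<Rightarrow> (nat \<Rightarrow> bit) set \<Rightarrow> (nat \<Rightarrow> bit) set \<Rightarrow> bool" where
  "twisted n C D \<longleftrightarrow> dual_code n D \<subseteq> C"

text \<open>Model matrices: entries Some p (0 <= p < z) or None (standing for infinity).\<close>
definition model_matrix :: "nat \<Rightarrow> nat \<Rightarrow> nat \<Rightarrow> (nat \<Rightarrow> nat \<Rightarrow> nat option) \<Rightarrow> bool" where
  "model_matrix z J L P \<longleftrightarrow> (\<forall>i<J. \<forall>j<L. \<forall>p. P i j = Some p \<longrightarrow> p < z)"

text \<open>Circulant permutation matrix I_z(b) = I_z(1)^b, where I_z(1) is the identity
  circularly shifted right by one: entry (a, c) is 1 iff c = (a + b) mod z.\<close>
definition circ_perm :: "nat \<Rightarrow> nat \<Rightarrow> nat \<Rightarrow> nat \<Rightarrow> bit" where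
  "circ_perm z b a c = (if c = (a + b) mod z then 1 else 0)"

definition qc_matrix :: "nat \<Rightarrow> (nat \<Rightarrow> nat \<Rightarrow> nat option) \<Rightarrow> nat \<Rightarrow> nat \<Rightarrow> bit" where
  "qc_matrix z P r c = (case P (r div z) (c div z) of
      None \<Rightarrow> 0
    | Some p \<Rightarrow> circ_perm z p (r mod z) (c mod z))"

definition base_matrix :: "(nat \<Rightarrow> nat \<Rightarrow> nat option) \<Rightarrow> nat \<Rightarrow> nat \<Rightarrow> bit" where
  "base_matrix P i j = (if P i j = None then 0 else 1)"

definition qc_code :: "nat \<Rightarrow> nat \<Rightarrow> nat \<Rightarrow> (nat \<Rightarrow> nat \<Rightarrow> nat option) \<Rightarrow> (nat \<Rightarrow> bit) set" where
  "qc_code z J L P = ker_code (J * z) (L * z) (qc_matrix z P)"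

end

theory Submission
  imports Defs
begin

text \<open>Write \<open>H\<^sub>C\<close>, \<open>H\<^sub>D\<close> for the parity-check matrices of the quasi-cyclic codes.
  For kernel codes the twisted condition says exactly that every row of \<open>H\<^sub>C\<close> is orthogonal
  to every row of \<open>H\<^sub>D\<close>. Every row and every column of a circulant permutation matrix sums
  to \<open>1\<close>. Hence summing the rows of \<open>H\<^sub>D\<close> within block row \<open>k\<close>, and the entries of a row of
  \<open>H\<^sub>C\<close> in block row \<open>i\<close> within each block column, turns the circulants into base-matrix
  entries: the inner product of rows \<open>i\<close> and \<open>k\<close> of the base matrices is a sum of inner
  products of rows of \<open>H\<^sub>C\<close> and \<open>H\<^sub>D\<close>, all of which vanish.\<close>

(* Keep \<open>+\<close> and \<open>*\<close> on bits as ring operations instead of rewriting them to XOR and AND. *)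
declare add_bit_eq_xor[simp del] mult_bit_eq_and[simp del]

lemma twisted_ker_code_iff:
  "twisted n (ker_code mC n HC) (ker_code mD n HD) \<longleftrightarrow>
   (\<forall>r<mC. \<forall>s<mD. (\<Sum>c<n. HC r c * HD s c) = 0)"
proof
  assume tw: "twisted n (ker_code mC n HC) (ker_code mD n HD)"
  show "\<forall>r<mC. \<forall>s<mD. (\<Sum>c<n. HC r c * HD s c) = 0"
  proof (intro allI impI)
    fix r s assume r: "r < mC" and s: "s < mD"
    define y where "y c = (if c < n then HD s c else 0)" for c
    have "(\<Sum>c<n. d c * y c) = 0" if "d \<in> ker_code mD n HD" for d
    proof -
      have "(\<Sum>c<n. d c * y c) = (\<Sum>c<n. HD s c * d c)"
        by (intro sum.cong) (simp_all add: y_def mult.commute)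
      with that s show ?thesis
        by (simp add: ker_code_def)
    qed
    moreover have "y \<in> vecs n"
      by (simp add: vecs_def y_def)
    ultimately have "y \<in> ker_code mC n HC"
      using tw by (auto simp: twisted_def dual_code_def)
    moreover have "(\<Sum>c<n. HC r c * y c) = (\<Sum>c<n. HC r c * HD s c)"
      by (intro sum.cong) (simp_all add: y_def)
    ultimately show "(\<Sum>c<n. HC r c * HD s c) = 0"
      using r by (simp add: ker_code_def)
  qed
next
  assume orth: "\<forall>r<mC. \<forall>s<mD. (\<Sum>c<n. HC r c * HD s c) = 0"
  show "twisted n (ker_code mC n HC) (ker_code mD n HD)"
    unfolding twisted_def
  proof
    fix y assume y: "y \<in> dual_code n (ker_code mD n HD)"
    have "(\<Sum>c<n. HC r c * y c) = 0" if r: "r < mC" for r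
    proof -
      define x where "x c = (if c < n then HC r c else 0)" for c
      have "(\<Sum>c<n. HD s c * x c) = 0" if "s < mD" for s
      proof -
        have "(\<Sum>c<n. HD s c * x c) = (\<Sum>c<n. HC r c * HD s c)"
          by (intro sum.cong) (simp_all add: x_def mult.commute)
        with orth r that show ?thesis
          by simp
      qed
      then have "x \<in> ker_code mD n HD"
        by (simp add: ker_code_def vecs_def x_def)
      moreover have "(\<Sum>c<n. x c * y c) = (\<Sum>c<n. HC r c * y c)"
        by (intro sum.cong) (simp_all add: x_def)
      ultimately show ?thesis
        using y by (simp add: dual_code_def)
    qed
    then show "y \<in> ker_code mC n HC"
      using y by (simp add: ker_code_def dual_code_def)
  qed
qed

lemma circ_perm_row_sum:
  assumes "0 < z"
  shows "(\<Sum>c<z. circ_perm z p a c) = 1"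
  using assms by (simp add: circ_perm_def)

lemma add_mod_eq_iff:
  fixes a c q z :: nat
  assumes "a < z" "c < z" "q < z"
  shows "c = (a + q) mod z \<longleftrightarrow> a = (c + z - q) mod z"
  using assms by (auto simp: mod_if split: if_splits)

lemma circ_perm_col_sum:
  assumes "c < z"
  shows "(\<Sum>a<z. circ_perm z p a c) = 1"
proof -
  define a\<^sub>0 where "a\<^sub>0 = (c + z - p mod z) mod z"
  have "c = (a + p) mod z \<longleftrightarrow> a = a\<^sub>0" if "a < z" for a
    using add_mod_eq_iff[OF that assms, of "p mod z"] assms
    by (simp add: a\<^sub>0_def mod_add_right_eq)
  then have "(\<Sum>a<z. circ_perm z p a c) = (\<Sum>a<z. if a = a\<^sub>0 then 1 else 0)"
    by (intro sum.cong) (simp_all add: circ_perm_def)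
  also have "\<dots> = 1"
    using assms by (simp add: a\<^sub>0_def)
  finally show ?thesis .
qed

lemma qc_matrix_block:
  assumes "a < z" "b < z"
  shows "qc_matrix z P (i * z + a) (j * z + b) =
    (case P i j of None \<Rightarrow> 0 | Some p \<Rightarrow> circ_perm z p a b)"
proof -
  have "(i * z + a) div z = i" "(i * z + a) mod z = a"
    and "(j * z + b) div z = j" "(j * z + b) mod z = b"
    using assms by simp_all
  then show ?thesis
    unfolding qc_matrix_def by (simp only:) \<comment> \<open>plain \<open>simp\<close> does not rewrite inside case branches\<close>
qed

lemma qc_matrix_block_row_sum:
  assumes "a < z"
  shows "(\<Sum>b<z. qc_matrix z P (i * z + a) (j * z + b)) = base_matrix P i j"
  using assms circ_perm_row_sum[of z]
  by (cases "P i j") (simp_all add: qc_matrix_block base_matrix_def)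

lemma qc_matrix_block_col_sum:
  assumes "b < z"
  shows "(\<Sum>a<z. qc_matrix z P (i * z + a) (j * z + b)) = base_matrix P i j"
  using assms circ_perm_col_sum[of b z]
  by (cases "P i j") (simp_all add: qc_matrix_block base_matrix_def)

lemma sum_lessThan_mult_blocks:
  fixes f :: "nat \<Rightarrow> 'a::comm_monoid_add"
  shows "(\<Sum>c<L * z. f c) = (\<Sum>j<L. \<Sum>b<z. f (j * z + b))"
proof -
  have "(\<Sum>c\<in>{j * z..<j * z + z}. f c) = (\<Sum>b<z. f (j * z + b))" for j
    using sum.shift_bounds_nat_ivl[where g = f and m = 0 and k = "j * z" and n = z]
    by (simp add: atLeast0LessThan add.commute)
  then show ?thesis
    by (simp add: sum.nat_group[symmetric])
qed

lemma base_matrix_inner_eq_qc_sum: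
  assumes "a < z"
  shows "(\<Sum>j<L. base_matrix PC i j * base_matrix PD k j) =
    (\<Sum>b<z. \<Sum>c<L * z. qc_matrix z PC (i * z + a) c * qc_matrix z PD (k * z + b) c)"
proof -
  have "(\<Sum>b<z. \<Sum>c<L * z. qc_matrix z PC (i * z + a) c * qc_matrix z PD (k * z + b) c)
      = (\<Sum>c<L * z. qc_matrix z PC (i * z + a) c * (\<Sum>b<z. qc_matrix z PD (k * z + b) c))"
    by (simp add: sum_distrib_left sum.swap[of _ "{..<z}"])
  also have "\<dots> = (\<Sum>j<L. \<Sum>t<z. qc_matrix z PC (i * z + a) (j * z + t) * base_matrix PD k j)"
    by (simp add: sum_lessThan_mult_blocks qc_matrix_block_col_sum)
  also have "\<dots> = (\<Sum>j<L. base_matrix PC i j * base_matrix PD k j)"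
    using assms by (simp add: sum_distrib_right[symmetric] qc_matrix_block_row_sum)
  finally show ?thesis ..
qed

lemma block_index_less:
  fixes i a J z :: nat
  assumes "i < J" "a < z"
  shows "i * z + a < J * z"
proof -
  have "i * z + a < Suc i * z"
    using assms(2) by simp
  also have "\<dots> \<le> J * z"
    using assms(1) by (intro mult_le_mono1) simp
  finally show ?thesis .
qed

theorem mainTheorem2:
  fixes z JC JD L :: nat and PC PD :: "nat \<Rightarrow> nat \<Rightarrow> nat option"
  assumes "z > 0"
    and "model_matrix z JC L PC"
    and "model_matrix z JD L PD"
    and "twisted (L * z) (qc_code z JC L PC) (qc_code z JD L PD)"
  shows "twisted L (ker_code JC L (base_matrix PC)) (ker_code JD L (base_matrix PD))
         \<and> (\<forall>i<JC. \<forall>k<JD. (\<Sum>j<L. base_matrix PC i j * base_matrix PD k j) = 0)"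
proof -
  have qc_orth: "(\<Sum>c<L * z. qc_matrix z PC r c * qc_matrix z PD s c) = 0"
    if "r < JC * z" "s < JD * z" for r s
    using assms(4) that unfolding qc_code_def twisted_ker_code_iff by blast
  have base_orth: "\<forall>i<JC. \<forall>k<JD. (\<Sum>j<L. base_matrix PC i j * base_matrix PD k j) = 0"
  proof (intro allI impI)
    fix i k assume "i < JC" "k < JD"
    then show "(\<Sum>j<L. base_matrix PC i j * base_matrix PD k j) = 0"
      using assms(1) base_matrix_inner_eq_qc_sum[where a = 0]
      by (simp add: qc_orth block_index_less)
  qed
  then show ?thesis
    by (simp add: twisted_ker_code_iff)
qed

end
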